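(* Let $X$ be a $T_1$ space with $|X|<\mathfrak d$. Then $X$ is set strongly star Menger if and only if $e(X)=\omega$.
   Context: For a family $\mathcal U$ of subsets of $X$ and $A\subseteq X$, $st(A,\mathcal U)=\bigcup\{U\in\mathcal U: U\cap A\neq\emptyset\}$. $X$ is set strongly star Menger if for every nonempty $A\subseteq X$ and every sequence $(\mathcal U_n:n\in\omega)$ of families of open sets with $\overline A\subseteq\bigcup\mathcal U_n$ for all $n$, there are finite $F_n\subseteq\overline A$ with $A\subseteq\bigcup_n st(F_n,\mathcal U_n)$. $e(X)$ is the supremum of cardinalities of closed discrete subsets of $X$ ($e(X)=\omega$ means every closed discrete subset is countable). $\mathfrak d$ is the minimal cardinality of a cofinal subset of $(\omega^\omega,\leq^* )$. *)

theory Defs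
  imports "HOL-Analysis.Analysis" "HOL-Library.Equipollence"
begin

definition st :: "'a set \<Rightarrow> 'a set set \<Rightarrow> 'a set" where
  "st A \<U> = \<Union>{U \<in> \<U>. U \<inter> A \<noteq> {}}"

definition set_strongly_star_Menger :: "'a topology \<Rightarrow> bool" where
  "set_strongly_star_Menger X \<longleftrightarrow>
    (\<forall>A \<U>. A \<noteq> {} \<and> A \<subseteq> topspace X \<and>
        (\<forall>n. (\<forall>U \<in> \<U> n. openin X U) \<and> X closure_of A \<subseteq> \<Union>(\<U> n)) \<longrightarrow>
      (\<exists>F :: nat \<Rightarrow> 'a set. (\<forall>n. finite (F n) \<and> F n \<subseteq> X closure_of A) \<and>
          A \<subseteq> (\<Union>n. st (F n) (\<U> n))))"

definition closed_discrete :: "'a topology \<Rightarrow> 'a set \<Rightarrow> bool" where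
  "closed_discrete X D \<longleftrightarrow> closedin X D \<and> subtopology X D = discrete_topology D"

definition extent_countable :: "'a topology \<Rightarrow> bool" where
  "extent_countable X \<longleftrightarrow> (\<forall>D. closed_discrete X D \<longrightarrow> countable D)"

definition le_star :: "(nat \<Rightarrow> nat) \<Rightarrow> (nat \<Rightarrow> nat) \<Rightarrow> bool" where
  "le_star f g \<longleftrightarrow> (\<forall>\<^sub>F n in sequentially. f n \<le> g n)"

definition dominating :: "(nat \<Rightarrow> nat) set \<Rightarrow> bool" where
  "dominating D \<longleftrightarrow> (\<forall>f. \<exists>g\<in>D. le_star f g)"

text \<open>|S| < \<dd>: S is strictly smaller than every dominating family
  (equivalently than the least cardinality of one).\<close>
definition less_than_dominating_number :: "'a set \<Rightarrow> bool" where
  "less_than_dominating_number S \<longleftrightarrow> (\<forall>D. dominating D \<longrightarrow> S \<prec> D)"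

end

theory Submission
  imports Defs
begin

text \<open>
  In a \<open>T\<^sub>1\<close> space, let \<open>\<U>\<close> be an open cover of a closed set \<open>C\<close> and \<open>M \<subseteq> C\<close> maximal
  such that no member of \<open>\<U>\<close> contains two points of \<open>M\<close>. Then \<open>M\<close> is closed discrete
  (every point has a neighbourhood meeting \<open>M\<close> in at most one point) and \<open>st M \<U>\<close>
  covers \<open>C\<close>. If \<open>e(X) = \<omega>\<close>, applying this to \<open>C = cl A\<close> and each \<open>\<U>\<^sub>n\<close> gives
  enumerations \<open>e\<^sub>n\<close> of such sets; each \<open>a \<in> A\<close> determines \<open>f\<^sub>a \<in> \<omega>\<^sup>\<omega>\<close> with
  \<open>a \<in> st {e\<^sub>n (f\<^sub>a n)} \<U>\<^sub>n\<close>, and as \<open>|A| < \<dd>\<close> some \<open>g\<close> satisfies \<open>f\<^sub>a n < g n\<close>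
  for some \<open>n\<close>, for every \<open>a\<close>; so \<open>F\<^sub>n = e\<^sub>n ` {..<g n}\<close> works. Conversely, if \<open>D\<close> is
  closed discrete, cover it by open sets each meeting \<open>D\<close> in one point: the stars of
  finite \<open>F\<^sub>n \<subseteq> D\<close> then meet \<open>D\<close> only in \<open>\<Union>F\<^sub>n\<close>, which is countable.
\<close>

lemma st_mono: "F \<subseteq> G \<Longrightarrow> st F \<U> \<subseteq> st G \<U>"
  unfolding st_def by blast

lemma maximal_separated_subset:
  assumes "C \<subseteq> \<Union>\<U>"
  shows "\<exists>M\<subseteq>C. pairwise (\<lambda>x y. \<forall>U\<in>\<U>. \<not> (x \<in> U \<and> y \<in> U)) M \<and> C \<subseteq> st M \<U>"
proof -
  define sep where "sep = (\<lambda>x y. \<forall>U\<in>\<U>. \<not> (x \<in> U \<and> y \<in> U))"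
  define \<D> where "\<D> = {M. M \<subseteq> C \<and> pairwise sep M}"
  have "\<Union>Ch \<in> \<D>" if "Ch \<in> chains \<D>" for Ch
    using that pairwise_chain_Union[of Ch sep] unfolding chains_def \<D>_def by blast
  then obtain M where M: "M \<in> \<D>" and maximal: "\<And>N. N \<in> \<D> \<Longrightarrow> M \<subseteq> N \<Longrightarrow> N = M"
    using Zorn_Lemma[of \<D>] by blast
  have "x \<in> st M \<U>" if "x \<in> C" for x
  proof (rule ccontr)
    assume x: "x \<notin> st M \<U>"
    then have "pairwise sep (insert x M)"
      using M unfolding \<D>_def sep_def st_def pairwise_insert by blast
    with M \<open>x \<in> C\<close> have "insert x M = M"
      by (intro maximal) (auto simp: \<D>_def)
    then show False
      using x \<open>x \<in> C\<close> assms unfolding st_def by blast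
  qed
  with M show ?thesis
    unfolding \<D>_def sep_def by blast
qed

lemma closed_discrete_iff_derived_set_empty:
  "closed_discrete X D \<longleftrightarrow> D \<subseteq> topspace X \<and> X derived_set_of D = {}"
  unfolding closed_discrete_def closedin_contains_derived_set subtopology_eq_discrete_topology_eq
  by blast

lemma closed_discrete_if_locally_finite:
  assumes t1: "t1_space X" and "M \<subseteq> topspace X"
    and loc: "\<And>x. x \<in> topspace X \<Longrightarrow> \<exists>U. openin X U \<and> x \<in> U \<and> finite (U \<inter> M)"
  shows "closed_discrete X M"
  unfolding closed_discrete_iff_derived_set_empty
proof (intro conjI equals0I)
  fix x assume x: "x \<in> X derived_set_of M"
  then have "x \<in> topspace X"
    by (simp add: in_derived_set_of)
  then obtain U where U: "openin X U" "x \<in> U" "finite (U \<inter> M)"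
    using loc by blast
  have "finite (U \<inter> M - {x})" and "U \<inter> M - {x} \<subseteq> topspace X"
    using U openin_subset by auto
  then have "closedin X (U \<inter> M - {x})"
    using t1 unfolding t1_space_closedin_finite by blast
  then have "openin X (U - (U \<inter> M - {x}))"
    by (rule openin_diff[OF U(1)])
  moreover have "x \<in> U - (U \<inter> M - {x})"
    using U(2) by blast
  ultimately obtain y where "y \<noteq> x" "y \<in> M" "y \<in> U - (U \<inter> M - {x})"
    using x unfolding in_derived_set_of by meson
  then show False
    by blast
qed (fact \<open>M \<subseteq> topspace X\<close>)

lemma closed_discrete_star_kernel:
  assumes t1: "t1_space X" and "closedin X C"
    and "\<forall>U\<in>\<U>. openin X U" and "C \<subseteq> \<Union>\<U>"
  shows "\<exists>D\<subseteq>C. closed_discrete X D \<and> C \<subseteq> st D \<U>"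
proof -
  obtain M where "M \<subseteq> C" and sep: "pairwise (\<lambda>x y. \<forall>U\<in>\<U>. \<not> (x \<in> U \<and> y \<in> U)) M"
    and "C \<subseteq> st M \<U>"
    using maximal_separated_subset[OF \<open>C \<subseteq> \<Union>\<U>\<close>] by blast
  have "\<exists>U. openin X U \<and> x \<in> U \<and> finite (U \<inter> M)" if x: "x \<in> topspace X" for x
  proof (cases "x \<in> C")
    case True
    then obtain U where "U \<in> \<U>" "x \<in> U"
      using \<open>C \<subseteq> \<Union>\<U>\<close> by blast
    moreover have "U \<inter> M \<subseteq> {d}" if "d \<in> U \<inter> M" for d
      using that sep \<open>U \<in> \<U>\<close> unfolding pairwise_def by blast
    then have "finite (U \<inter> M)"
      by (metis finite.emptyI finite_insert finite_subset subsetI subset_empty)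
    ultimately show ?thesis
      using assms by blast
  next
    case False
    have "(topspace X - C) \<inter> M = {}"
      using \<open>M \<subseteq> C\<close> by blast
    with False x \<open>closedin X C\<close> show ?thesis
      by (intro exI[of _ "topspace X - C"]) (auto simp: openin_diff)
  qed
  then have "closed_discrete X M"
    using closed_discrete_if_locally_finite[OF t1] \<open>M \<subseteq> C\<close> \<open>closedin X C\<close> closedin_subset
    by blast
  with \<open>M \<subseteq> C\<close> \<open>C \<subseteq> st M \<U>\<close> show ?thesis
    by blast
qed

lemma closed_discrete_isolating_neighbourhoods:
  assumes "closed_discrete X D"
  obtains V where "\<And>d. d \<in> D \<Longrightarrow> openin X (V d)" and "\<And>d. d \<in> D \<Longrightarrow> V d \<inter> D = {d}"
proof -
  have "\<exists>V. openin X V \<and> V \<inter> D = {d}" if "d \<in> D" for d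
  proof -
    have "openin (subtopology X D) {d}"
      using assms that unfolding closed_discrete_def by simp
    then show ?thesis
      unfolding openin_subtopology by blast
  qed
  then show ?thesis
    using that by metis
qed

lemma st_isolating_family_Int:
  assumes isolates: "\<And>d. d \<in> D \<Longrightarrow> V d \<inter> D = {d}" and "F \<subseteq> D"
  shows "st F (V ` D) \<inter> D \<subseteq> F"
proof
  fix x assume x: "x \<in> st F (V ` D) \<inter> D"
  then obtain d where "d \<in> D" and "x \<in> V d" and "V d \<inter> F \<noteq> {}"
    unfolding st_def by blast
  have "x = d"
    using isolates[OF \<open>d \<in> D\<close>] \<open>x \<in> V d\<close> x by blast
  moreover have "V d \<inter> F \<subseteq> {d}"
    using isolates[OF \<open>d \<in> D\<close>] \<open>F \<subseteq> D\<close> by blast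
  ultimately show "x \<in> F"
    using \<open>V d \<inter> F \<noteq> {}\<close> by blast
qed

lemma set_strongly_star_Menger_imp_extent_countable:
  assumes "set_strongly_star_Menger X"
  shows "extent_countable X"
  unfolding extent_countable_def
proof (intro allI impI)
  fix D assume D: "closed_discrete X D"
  show "countable D"
  proof (cases "D = {}")
    case False
    obtain V where V_open: "\<And>d. d \<in> D \<Longrightarrow> openin X (V d)"
      and V_isolates: "\<And>d. d \<in> D \<Longrightarrow> V d \<inter> D = {d}"
      using closed_discrete_isolating_neighbourhoods[OF D] by blast
    have "closedin X D"
      using D unfolding closed_discrete_def by blast
    then have closure_D: "X closure_of D = D" and "D \<subseteq> topspace X"
      by (simp_all add: closure_of_closedin closedin_subset)
    have "D \<subseteq> \<Union>(V ` D)"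
      using V_isolates by blast
    then have "\<forall>n. (\<forall>U \<in> V ` D. openin X U) \<and> X closure_of D \<subseteq> \<Union>(V ` D)"
      using V_open closure_D by simp
    then have "\<exists>F :: nat \<Rightarrow> 'a set. (\<forall>n. finite (F n) \<and> F n \<subseteq> X closure_of D) \<and>
        D \<subseteq> (\<Union>n. st (F n) (V ` D))"
      using False \<open>D \<subseteq> topspace X\<close>
        assms[unfolded set_strongly_star_Menger_def, rule_format, of D "\<lambda>_. V ` D"]
      by simp
    then obtain F :: "nat \<Rightarrow> 'a set" where F: "\<And>n. finite (F n) \<and> F n \<subseteq> D"
      and cover: "D \<subseteq> (\<Union>n. st (F n) (V ` D))"
      using closure_D by auto
    have "st (F n) (V ` D) \<inter> D \<subseteq> F n" for n
      using st_isolating_family_Int[OF V_isolates] F by simp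
    with cover have "D \<subseteq> (\<Union>n. F n)"
      by blast
    moreover have "countable (\<Union>n. F n)"
      using F by (simp add: countable_finite)
    ultimately show ?thesis
      using countable_subset by blast
  qed simp
qed

lemma less_than_dominating_number_escaping_function:
  fixes f :: "'a \<Rightarrow> nat \<Rightarrow> nat"
  assumes "less_than_dominating_number S" and "A \<subseteq> S"
  obtains g where "\<And>a. a \<in> A \<Longrightarrow> \<exists>n. f a n < g n"
proof -
  have "f ` A \<lesssim> S"
    using assms(2) image_lepoll subset_imp_lepoll lepoll_trans by metis
  then have "\<not> dominating (f ` A)"
    using assms(1) lesspoll_trans2 unfolding less_than_dominating_number_def by blast
  then obtain g where "\<And>a. a \<in> A \<Longrightarrow> \<not> le_star g (f a)"
    unfolding dominating_def by blast
  then have "\<exists>n. f a n < g n" if "a \<in> A" for a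
    using that frequently_ex unfolding le_star_def not_eventually not_le by blast
  then show ?thesis
    using that by blast
qed

lemma star_cover_by_initial_segments:
  fixes e :: "nat \<Rightarrow> nat \<Rightarrow> 'a"
  assumes "less_than_dominating_number S" and "A \<subseteq> S"
    and cover: "\<And>n. A \<subseteq> st (range (e n)) (\<U> n)"
  obtains g where "A \<subseteq> (\<Union>n. st (e n ` {..<g n}) (\<U> n))"
proof -
  have "\<exists>k. a \<in> st {e n k} (\<U> n)" if "a \<in> A" for a n
    using that cover unfolding st_def by blast
  then obtain f where f: "\<And>a n. a \<in> A \<Longrightarrow> a \<in> st {e n (f a n)} (\<U> n)"
    by metis
  obtain g where g: "\<And>a. a \<in> A \<Longrightarrow> \<exists>n. f a n < g n"
    using less_than_dominating_number_escaping_function[OF assms(1,2)] by blast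
  have "a \<in> (\<Union>n. st (e n ` {..<g n}) (\<U> n))" if "a \<in> A" for a
  proof -
    obtain n where "f a n < g n"
      using g \<open>a \<in> A\<close> by blast
    then have "st {e n (f a n)} (\<U> n) \<subseteq> st (e n ` {..<g n}) (\<U> n)"
      by (intro st_mono) auto
    then show ?thesis
      using f \<open>a \<in> A\<close> by blast
  qed
  then show ?thesis
    using that by blast
qed

lemma extent_countable_imp_set_strongly_star_Menger:
  assumes t1: "t1_space X" and small: "less_than_dominating_number (topspace X)"
    and "extent_countable X"
  shows "set_strongly_star_Menger X"
  unfolding set_strongly_star_Menger_def
proof (intro allI impI, elim conjE)
  fix A and \<U> :: "nat \<Rightarrow> 'a set set"
  assume "A \<noteq> {}" and "A \<subseteq> topspace X"
    and \<U>: "\<forall>n. (\<forall>U \<in> \<U> n. openin X U) \<and> X closure_of A \<subseteq> \<Union>(\<U> n)"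
  define C where "C = X closure_of A"
  have "A \<subseteq> C"
    unfolding C_def using \<open>A \<subseteq> topspace X\<close> closure_of_subset by blast
  have "\<exists>D\<subseteq>C. closed_discrete X D \<and> C \<subseteq> st D (\<U> n)" for n
    using closed_discrete_star_kernel[OF t1] \<U> unfolding C_def by simp
  then obtain D where D: "\<And>n. D n \<subseteq> C \<and> closed_discrete X (D n) \<and> C \<subseteq> st (D n) (\<U> n)"
    by metis
  have "D n \<noteq> {}" for n
    using D[of n] \<open>A \<subseteq> C\<close> \<open>A \<noteq> {}\<close> unfolding st_def by blast
  moreover have "countable (D n)" for n
    using D \<open>extent_countable X\<close> unfolding extent_countable_def by blast
  ultimately have range_D: "range (from_nat_into (D n)) = D n" for n
    by (simp add: range_from_nat_into)
  have star_cover: "A \<subseteq> st (range (from_nat_into (D n))) (\<U> n)" for n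
    unfolding range_D using D \<open>A \<subseteq> C\<close> by blast
  obtain g where g: "A \<subseteq> (\<Union>n. st (from_nat_into (D n) ` {..<g n}) (\<U> n))"
    using star_cover_by_initial_segments[OF small \<open>A \<subseteq> topspace X\<close> star_cover] .
  show "\<exists>F. (\<forall>n. finite (F n) \<and> F n \<subseteq> X closure_of A) \<and> A \<subseteq> (\<Union>n. st (F n) (\<U> n))"
  proof (intro exI conjI allI)
    fix n
    show "finite (from_nat_into (D n) ` {..<g n})"
      by simp
    show "from_nat_into (D n) ` {..<g n} \<subseteq> X closure_of A"
      using range_D D unfolding C_def by blast
  qed (rule g)
qed

theorem corollary2p1:
  fixes X :: "'a topology"
  assumes "t1_space X"
    and "less_than_dominating_number (topspace X)"
  shows "set_strongly_star_Menger X \<longleftrightarrow> extent_countable X"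
  using set_strongly_star_Menger_imp_extent_countable
    extent_countable_imp_set_strongly_star_Menger[OF assms] by blast

end
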